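(* Let $\langle E,\rightarrow\rangle$ be a computation, $b$ a regular predicate, and $C$ a non-trivial consistent cut of $\langle E,\rightarrow\rangle$. Then $C$ satisfies $\neg b$ if and only if there exist events $e,f$ such that there is no path from $e$ to $f$ in $\langle E,\rightarrow\rangle$, there is a path from $e$ to $f$ in the slice of $\langle E,\rightarrow\rangle$ with respect to $b$, and $C$ satisfies $\mathrm{prevents}(f,e)$ (i.e., $f\in C$ and $e\notin C$).
   Context: A computation is a directed graph $\langle E, \rightarrow\rangle$ whose vertices (events) are partitioned among processes, each with an initial and a final event, whose path relation contains Lamport's happened-before relation, with all initial (resp. final) events in one strongly connected component. A vertex subset $C$ is a consistent cut if for every edge $(u,v)$, $v\in C$ implies $u\in C$; $\emptyset$ and $E$ are trivial. A predicate is evaluated on non-trivial consistent cuts and is regular if whenever consistent cuts $C_1,C_2$ satisfy it, so do $C_1\cap C_2$ and $C_1\cup C_2$. The slice with respect to $b$ is a directed graph on $E$ whose consistent cuts include every consistent cut of the computation satisfying $b$ and which has the fewest consistent cuts among all such graphs. *)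

theory Defs
  imports Main
begin

text \<open>Events are partitioned among processes P via proc; po is the process order
  (a strict total order on the events of each process), msg the set of
  (send, receive) pairs; Lamport's happened-before is (po \<union> msg)^+.\<close>

definition computation ::
  "'a set \<Rightarrow> ('a \<times> 'a) set \<Rightarrow> 'p set \<Rightarrow> ('a \<Rightarrow> 'p) \<Rightarrow> ('a \<times> 'a) set
     \<Rightarrow> ('a \<times> 'a) set \<Rightarrow> ('p \<Rightarrow> 'a) \<Rightarrow> ('p \<Rightarrow> 'a) \<Rightarrow> bool" where
  "computation E R P proc po msg init fin \<longleftrightarrow>
     finite E \<and> R \<subseteq> E \<times> E \<and>
     proc ` E = P \<and>
     po \<subseteq> {(e, f). e \<in> E \<and> f \<in> E \<and> proc e = proc f} \<and>
     (\<forall>p\<in>P. strict_linear_order_on {e \<in> E. proc e = p} po) \<and>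
     msg \<subseteq> E \<times> E \<and>
     (\<forall>p\<in>P. init p \<in> E \<and> proc (init p) = p \<and> fin p \<in> E \<and> proc (fin p) = p \<and>
        init p \<noteq> fin p \<and>
        (\<forall>e\<in>E. proc e = p \<longrightarrow> e \<noteq> init p \<longrightarrow> (init p, e) \<in> po) \<and>
        (\<forall>e\<in>E. proc e = p \<longrightarrow> e \<noteq> fin p \<longrightarrow> (e, fin p) \<in> po)) \<and>
     (po \<union> msg)\<^sup>+ \<subseteq> R\<^sup>+ \<and>
     (\<forall>p\<in>P. \<forall>q\<in>P. (init p, init q) \<in> R\<^sup>* \<and> (fin p, fin q) \<in> R\<^sup>*)"

definition consistent_cut :: "'a set \<Rightarrow> ('a \<times> 'a) set \<Rightarrow> 'a set \<Rightarrow> bool" where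
  "consistent_cut E R C \<longleftrightarrow> C \<subseteq> E \<and> (\<forall>(u, v) \<in> R. v \<in> C \<longrightarrow> u \<in> C)"

definition nontrivial_cut :: "'a set \<Rightarrow> 'a set \<Rightarrow> bool" where
  "nontrivial_cut E C \<longleftrightarrow> C \<noteq> {} \<and> C \<noteq> E"

definition cuts :: "'a set \<Rightarrow> ('a \<times> 'a) set \<Rightarrow> 'a set set" where
  "cuts E R = {C. consistent_cut E R C}"

definition satisfies :: "'a set \<Rightarrow> ('a \<times> 'a) set \<Rightarrow> ('a set \<Rightarrow> bool) \<Rightarrow> 'a set \<Rightarrow> bool" where
  "satisfies E R b C \<longleftrightarrow> consistent_cut E R C \<and> nontrivial_cut E C \<and> b C"

definition regular :: "'a set \<Rightarrow> ('a \<times> 'a) set \<Rightarrow> ('a set \<Rightarrow> bool) \<Rightarrow> bool" where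
  "regular E R b \<longleftrightarrow>
     (\<forall>C1 C2. satisfies E R b C1 \<and> satisfies E R b C2 \<longrightarrow>
        satisfies E R b (C1 \<inter> C2) \<and> satisfies E R b (C1 \<union> C2))"

definition is_slice :: "'a set \<Rightarrow> ('a \<times> 'a) set \<Rightarrow> ('a set \<Rightarrow> bool) \<Rightarrow> ('a \<times> 'a) set \<Rightarrow> bool" where
  "is_slice E R b S \<longleftrightarrow>
     S \<subseteq> E \<times> E \<and>
     (\<forall>C. satisfies E R b C \<longrightarrow> consistent_cut E S C) \<and>
     (\<forall>G. G \<subseteq> E \<times> E \<longrightarrow> (\<forall>C. satisfies E R b C \<longrightarrow> consistent_cut E G C) \<longrightarrow>
        card (cuts E S) \<le> card (cuts E G))"

end

theory Submission
  imports Defs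
begin

text \<open>The cuts satisfying a regular predicate b, together with the two trivial
  cuts, form a sublattice L of the power set of E.  By Birkhoff's
  representation, every such sublattice of a finite power set is exactly the set
  of consistent cuts of a graph on E (put e \<rightarrow> f when every member of L
  containing f contains e).  Since the slice has the fewest cuts among graphs
  whose cuts include L, its cuts are exactly L.  Hence a non-trivial consistent
  cut C violates b iff C is not a cut of the slice, i.e. iff some slice path
  leads from outside C into C; as C is closed under paths of the computation,
  that path is not one of the computation.\<close>

lemma consistent_cut_trancl:
  assumes "consistent_cut E R C" and "(u, v) \<in> R\<^sup>+" and "v \<in> C"
  shows "u \<in> C"
  using assms(2,3) by induction (use assms(1) in \<open>auto simp: consistent_cut_def\<close>)

lemma consistent_cut_iff_trancl:
  "consistent_cut E R C \<longleftrightarrow> C \<subseteq> E \<and> (\<forall>(u, v) \<in> R\<^sup>+. v \<in> C \<longrightarrow> u \<in> C)"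
  unfolding consistent_cut_def by (blast intro: consistent_cut_trancl[unfolded consistent_cut_def])

lemma trivial_cuts_in_cuts:
  assumes "R \<subseteq> E \<times> E"
  shows "{{}, E} \<subseteq> cuts E R"
  using assms by (auto simp: cuts_def consistent_cut_def)

lemma finite_cuts: "finite E \<Longrightarrow> finite (cuts E R)"
  by (auto simp: cuts_def consistent_cut_def intro: rev_finite_subset[of "Pow E"])

definition set_lattice :: "'a set \<Rightarrow> 'a set set \<Rightarrow> bool" where
  "set_lattice E L \<longleftrightarrow> L \<subseteq> Pow E \<and> {} \<in> L \<and> E \<in> L \<and>
     (\<forall>A \<in> L. \<forall>B \<in> L. A \<inter> B \<in> L \<and> A \<union> B \<in> L)"

lemma set_lattice_Union:
  assumes "set_lattice E L" and "finite F" and "F \<subseteq> L"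
  shows "\<Union>F \<in> L"
  using assms(2,3) by induction (use assms(1) in \<open>auto simp: set_lattice_def\<close>)

lemma set_lattice_Inter:
  assumes "set_lattice E L" and "finite F" and "F \<noteq> {}" and "F \<subseteq> L"
  shows "\<Inter>F \<in> L"
  using assms(2-4) by (induction rule: finite_ne_induct) (use assms(1) in \<open>auto simp: set_lattice_def\<close>)

definition lattice_graph :: "'a set \<Rightarrow> 'a set set \<Rightarrow> ('a \<times> 'a) set" where
  "lattice_graph E L = {(e, f). e \<in> E \<and> f \<in> E \<and> (\<forall>D \<in> L. f \<in> D \<longrightarrow> e \<in> D)}"

lemma lattice_graph_subset: "lattice_graph E L \<subseteq> E \<times> E"
  by (auto simp: lattice_graph_def)

text \<open>Birkhoff's representation: a cut D of the graph is the union, over f \<in> D,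
  of the least member of L containing f.\<close>

lemma cuts_lattice_graph:
  assumes "finite E" and L: "set_lattice E L"
  shows "cuts E (lattice_graph E L) = L"
proof
  show "L \<subseteq> cuts E (lattice_graph E L)"
    using L by (auto simp: set_lattice_def cuts_def consistent_cut_def lattice_graph_def)
next
  show "cuts E (lattice_graph E L) \<subseteq> L"
  proof
    fix D assume "D \<in> cuts E (lattice_graph E L)"
    then have DE: "D \<subseteq> E" and closed: "\<And>e f. (e, f) \<in> lattice_graph E L \<Longrightarrow> f \<in> D \<Longrightarrow> e \<in> D"
      by (auto simp: cuts_def consistent_cut_def)
    define least where "least f = \<Inter>{D' \<in> L. f \<in> D'}" for f
    have finL: "finite L"
      using L \<open>finite E\<close> by (auto simp: set_lattice_def intro: finite_subset)
    have least_in_L: "least f \<in> L" if "f \<in> D" for f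
      unfolding least_def
      by (rule set_lattice_Inter[OF L]) (use finL L that DE in \<open>auto simp: set_lattice_def\<close>)
    have least_sub: "least f \<subseteq> D" if "f \<in> D" for f
    proof
      fix e assume "e \<in> least f"
      then have "(e, f) \<in> lattice_graph E L"
        using L that DE by (auto simp: least_def lattice_graph_def set_lattice_def)
      then show "e \<in> D" using closed that by blast
    qed
    have "D = \<Union>(least ` D)"
      using least_sub by (auto simp: least_def)
    also have "\<dots> \<in> L"
      by (rule set_lattice_Union[OF L])
        (use least_in_L finite_subset[OF DE \<open>finite E\<close>] in auto)
    finally show "D \<in> L" .
  qed
qed

abbreviation satisfying_cuts :: "'a set \<Rightarrow> ('a \<times> 'a) set \<Rightarrow> ('a set \<Rightarrow> bool) \<Rightarrow> 'a set set" where
  "satisfying_cuts E R b \<equiv> {D. satisfies E R b D} \<union> {{}, E}"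

lemma regular_set_lattice:
  assumes "regular E R b"
  shows "set_lattice E (satisfying_cuts E R b)"
proof -
  have "A \<inter> B \<in> satisfying_cuts E R b \<and> A \<union> B \<in> satisfying_cuts E R b"
    if A: "A \<in> satisfying_cuts E R b" and B: "B \<in> satisfying_cuts E R b" for A B
  proof (cases "satisfies E R b A \<and> satisfies E R b B")
    case True
    then show ?thesis using assms by (auto simp: regular_def)
  next
    case False
    moreover have "A \<subseteq> E" "B \<subseteq> E"
      using A B by (auto simp: satisfies_def consistent_cut_def)
    ultimately show ?thesis
      using A B by (auto simp: Int_absorb1 Int_absorb2 Un_absorb1 Un_absorb2)
  qed
  then show ?thesis
    by (auto simp: set_lattice_def satisfies_def consistent_cut_def)
qed

lemma slice_cuts:
  assumes "finite E" and "regular E R b" and slice: "is_slice E R b S"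
  shows "cuts E S = satisfying_cuts E R b"
proof -
  let ?L = "satisfying_cuts E R b"
  let ?G = "lattice_graph E ?L"
  have S_graph: "S \<subseteq> E \<times> E"
    and S_cuts: "\<And>D. satisfies E R b D \<Longrightarrow> consistent_cut E S D"
    and S_min: "\<And>G. G \<subseteq> E \<times> E \<Longrightarrow> (\<forall>D. satisfies E R b D \<longrightarrow> consistent_cut E G D) \<Longrightarrow>
        card (cuts E S) \<le> card (cuts E G)"
    using slice unfolding is_slice_def by blast+
  have G_cuts: "cuts E ?G = ?L"
    using assms(1) regular_set_lattice[OF assms(2)] by (rule cuts_lattice_graph)
  have L_sub: "?L \<subseteq> cuts E S"
    using S_cuts trivial_cuts_in_cuts[OF S_graph] by (auto simp: cuts_def)
  have "card (cuts E S) \<le> card (cuts E ?G)"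
  proof (rule S_min[OF lattice_graph_subset])
    show "\<forall>D. satisfies E R b D \<longrightarrow> consistent_cut E ?G D"
      using G_cuts by (auto simp: cuts_def)
  qed
  then have "card (cuts E S) \<le> card ?L"
    by (simp only: G_cuts)
  then have "card ?L = card (cuts E S)"
    using card_mono[OF finite_cuts[OF assms(1)] L_sub] by (rule antisym[rotated])
  with card_subset_eq[OF finite_cuts[OF assms(1)] L_sub] show ?thesis
    by simp
qed

theorem theorem16:
  fixes E :: "'a set" and R S :: "('a \<times> 'a) set" and P :: "'p set"
    and proc :: "'a \<Rightarrow> 'p" and po msg :: "('a \<times> 'a) set"
    and init fin :: "'p \<Rightarrow> 'a" and b :: "'a set \<Rightarrow> bool" and C :: "'a set"
  assumes "computation E R P proc po msg init fin"
    and "regular E R b"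
    and "is_slice E R b S"
    and "consistent_cut E R C"
    and "nontrivial_cut E C"
  shows "\<not> b C \<longleftrightarrow>
    (\<exists>e f. e \<in> E \<and> f \<in> E \<and> (e, f) \<notin> R\<^sup>+ \<and> (e, f) \<in> S\<^sup>+ \<and> f \<in> C \<and> e \<notin> C)"
proof -
  have "finite E" using assms(1) by (simp add: computation_def)
  have S_paths: "S\<^sup>+ \<subseteq> E \<times> E"
    using assms(3) trancl_subset_Sigma by (auto simp: is_slice_def)
  have "b C \<longleftrightarrow> C \<in> satisfying_cuts E R b"
    using assms(4,5) by (auto simp: satisfies_def nontrivial_cut_def)
  also have "\<dots> \<longleftrightarrow> C \<in> cuts E S"
    by (simp only: slice_cuts[OF \<open>finite E\<close> assms(2,3)])
  also have "\<dots> \<longleftrightarrow> consistent_cut E S C"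
    by (simp add: cuts_def)
  finally have "\<not> b C \<longleftrightarrow> \<not> consistent_cut E S C"
    by simp
  also have "\<dots> \<longleftrightarrow> (\<exists>e f. (e, f) \<in> S\<^sup>+ \<and> f \<in> C \<and> e \<notin> C)"
    using assms(4) by (auto simp: consistent_cut_iff_trancl)
  also have "\<dots> \<longleftrightarrow>
      (\<exists>e f. e \<in> E \<and> f \<in> E \<and> (e, f) \<notin> R\<^sup>+ \<and> (e, f) \<in> S\<^sup>+ \<and> f \<in> C \<and> e \<notin> C)"
    using S_paths consistent_cut_trancl[OF assms(4)] by blast
  finally show ?thesis .
qed

end
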